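(* Let $A$ be a real $n\times n$ matrix all of whose eigenvalues $\lambda_1,\dots,\lambda_n$ are real and nonzero, and let $J$ be its Jordan normal form. For $\varepsilon\in\mathbb{C}$ and $a\in\mathbb{R}$ let $L_\varepsilon(a)=-\varepsilon a^2\,\mathrm{Id}+\mathrm{i}a\,\mathrm{Id}+\varepsilon J$ and $\Gamma_\varepsilon=\sup_{a\in\mathbb{R}}|L_\varepsilon(a)^{-1}|$. Let $\Omega(\sigma,\mu)=\{\varepsilon\in\mathbb{C}:\ \mathrm{Re}(\varepsilon)\ge\mu|\mathrm{Im}(\varepsilon)|,\ \sigma\le|\varepsilon|\le2\sigma\}$ with $\mu>\mu_0$, $\mu_0$ sufficiently large, and $\sigma>0$ sufficiently small. Then for every $\varepsilon\in\Omega(\sigma,\mu)$, $L_\varepsilon(a)$ is invertible for all $a\in\mathbb{R}$ and $$\Gamma_\varepsilon\le\sigma^{-1}C_{\lambda,\mu},$$ where $C_{\lambda,\mu}>0$ depends only on $\lambda_1,\dots,\lambda_n$ and $\mu$.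
   Context: $|\cdot|$ denotes a matrix norm on $n\times n$ complex matrices. *)

theory Defs
  imports "Jordan_Normal_Form.Jordan_Normal_Form" "HOL-Analysis.Analysis"
begin

text \<open>Matrix norm on complex square matrices: the Frobenius norm (a submultiplicative
matrix norm; all norms on n x n matrices are equivalent with constants depending on n only).\<close>
definition mat_norm :: "complex mat \<Rightarrow> real" where
  "mat_norm M = sqrt (\<Sum>i<dim_row M. \<Sum>j<dim_col M. (cmod (M $$ (i, j)))^2)"

definition mat_inv :: "complex mat \<Rightarrow> complex mat" where
  "mat_inv M = (SOME B. B \<in> carrier_mat (dim_row M) (dim_row M) \<and> inverts_mat M B \<and> inverts_mat B M)"

definition L_mat :: "nat \<Rightarrow> complex mat \<Rightarrow> complex \<Rightarrow> real \<Rightarrow> complex mat" where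
  "L_mat n J eps a = (- eps * (complex_of_real a)^2 + \<i> * complex_of_real a) \<cdot>\<^sub>m 1\<^sub>m n + eps \<cdot>\<^sub>m J"

definition Omega :: "real \<Rightarrow> real \<Rightarrow> complex set" where
  "Omega \<sigma> \<mu> = {eps. Re eps \<ge> \<mu> * \<bar>Im eps\<bar> \<and> \<sigma> \<le> cmod eps \<and> cmod eps \<le> 2 * \<sigma>}"

end

theory Submission
  imports Defs
begin

text \<open>
  The Jordan matrix \<open>J\<close> is upper bidiagonal with the eigenvalues \<open>\<lambda>\<^sub>k\<close> on the diagonal and
  entries in \<open>{0, 1}\<close> above it, so \<open>L\<^sub>\<epsilon>(a)\<close> is upper bidiagonal too, with diagonal entries
  \<open>\<epsilon>(\<lambda>\<^sub>k - a\<^sup>2) + i a\<close> and superdiagonal entries of modulus at most \<open>|\<epsilon>|\<close>.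
  Already \<open>\<mu> \<ge> 1\<close> confines \<open>\<epsilon>\<close> to the sector \<open>Re \<epsilon> \<ge> |Im \<epsilon>|\<close>; there, once
  \<open>|\<epsilon>| |\<lambda>\<^sub>k| \<le> (|\<lambda>\<^sub>k|/2)\<^sup>1\<^sup>/\<^sup>2\<close>, every diagonal entry has modulus at least \<open>|\<lambda>\<^sub>k| |\<epsilon>| / 4\<close>:
  if \<open>a\<^sup>2\<close> is far from \<open>\<lambda>\<^sub>k\<close> the real part is large, otherwise \<open>|a|\<close> is of order
  \<open>|\<lambda>\<^sub>k|\<^sup>1\<^sup>/\<^sup>2\<close> and the imaginary part is large.
  Back substitution inverts a bidiagonal matrix explicitly: the \<open>(i, j)\<close> entry of the inverse
  is a product of \<open>j - i\<close> quotients of superdiagonal by diagonal entries, divided by one more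
  diagonal entry. With \<open>c \<le> min\<^sub>k |\<lambda>\<^sub>k|/4\<close> each such entry is at most
  \<open>c\<^sup>-\<^sup>n\<^sup>-\<^sup>1 / |\<epsilon>| \<le> c\<^sup>-\<^sup>n\<^sup>-\<^sup>1 / \<sigma>\<close>.
\<close>

definition upper_bidiagonal_mat :: "nat \<Rightarrow> 'a::zero mat \<Rightarrow> bool" where
  "upper_bidiagonal_mat n M \<longleftrightarrow>
     M \<in> carrier_mat n n \<and> (\<forall>i<n. \<forall>j<n. j \<noteq> i \<longrightarrow> j \<noteq> Suc i \<longrightarrow> M $$ (i, j) = 0)"

definition bidiag_inverse :: "'a::field mat \<Rightarrow> 'a mat" where
  "bidiag_inverse M = Matrix.mat (dim_row M) (dim_row M) (\<lambda>(i, j).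
     if i \<le> j then (\<Prod>k\<in>{i..<j}. - M $$ (k, Suc k)) / (\<Prod>k\<in>{i..j}. M $$ (k, k)) else 0)"

lemma bidiag_inverse_carrier: "M \<in> carrier_mat n n \<Longrightarrow> bidiag_inverse M \<in> carrier_mat n n"
  by (simp add: bidiag_inverse_def)

lemma upper_bidiagonal_mult_index:
  fixes M :: "'a::semiring_0 mat"
  assumes M: "upper_bidiagonal_mat n M" and B: "B \<in> carrier_mat n n" and "i < n" "j < n"
  shows "(M * B) $$ (i, j) =
    M $$ (i, i) * B $$ (i, j) + (if Suc i < n then M $$ (i, Suc i) * B $$ (Suc i, j) else 0)"
proof -
  have "(M * B) $$ (i, j) = (\<Sum>k<n. M $$ (i, k) * B $$ (k, j))"
    using M B assms(3,4) by (auto simp: upper_bidiagonal_mat_def scalar_prod_def lessThan_atLeast0)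
  also have "\<dots> = (\<Sum>k<n. (if k = i then M $$ (i, i) * B $$ (i, j) else 0)
       + (if k = Suc i then M $$ (i, Suc i) * B $$ (Suc i, j) else 0))"
    using M \<open>i < n\<close> by (intro sum.cong) (auto simp: upper_bidiagonal_mat_def)
  also have "\<dots> = M $$ (i, i) * B $$ (i, j) + (if Suc i < n then M $$ (i, Suc i) * B $$ (Suc i, j) else 0)"
    using \<open>i < n\<close> by (simp add: sum.distrib)
  finally show ?thesis .
qed

lemma bidiag_inverse_right:
  assumes M: "upper_bidiagonal_mat n M" and diag: "\<And>i. i < n \<Longrightarrow> M $$ (i, i) \<noteq> 0"
  shows "M * bidiag_inverse M = 1\<^sub>m n"
proof (rule eq_matI)
  let ?B = "bidiag_inverse M"
  have Mc: "M \<in> carrier_mat n n" using M by (simp add: upper_bidiagonal_mat_def)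
  then have B: "?B \<in> carrier_mat n n" by (rule bidiag_inverse_carrier)
  then show "dim_row (M * ?B) = dim_row (1\<^sub>m n)" "dim_col (M * ?B) = dim_col (1\<^sub>m n)"
    using Mc by auto
  fix i j assume "i < dim_row (1\<^sub>m n)" and "j < dim_col (1\<^sub>m n)"
  then have i: "i < n" and j: "j < n" by auto
  consider "j < i" | "i = j" | "i < j" by linarith
  then have "M $$ (i, i) * ?B $$ (i, j) + (if Suc i < n then M $$ (i, Suc i) * ?B $$ (Suc i, j) else 0)
      = 1\<^sub>m n $$ (i, j)"
  proof cases
    case 1
    then show ?thesis using Mc i j by (auto simp: bidiag_inverse_def)
  next
    case 2
    then show ?thesis using Mc i j diag by (auto simp: bidiag_inverse_def)
  next
    case 3
    have num: "(\<Prod>k\<in>{i..<j}. - M $$ (k, Suc k)) = - M $$ (i, Suc i) * (\<Prod>k\<in>{Suc i..<j}. - M $$ (k, Suc k))"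
      using 3 by (simp add: prod.atLeast_Suc_lessThan)
    have den: "(\<Prod>k\<in>{i..j}. M $$ (k, k)) = M $$ (i, i) * (\<Prod>k\<in>{Suc i..j}. M $$ (k, k))"
      using 3 by (simp add: prod.atLeast_Suc_atMost)
    have "(\<Prod>k\<in>{Suc i..j}. M $$ (k, k)) \<noteq> 0"
      using diag j by (auto simp: prod_zero_iff)
    then show ?thesis using 3 Mc i j diag[OF i] unfolding bidiag_inverse_def
      by (simp add: num den field_simps)
  qed
  then show "(M * ?B) $$ (i, j) = 1\<^sub>m n $$ (i, j)"
    using upper_bidiagonal_mult_index[OF M B i j] by simp
qed

lemma norm_bidiag_inverse_le:
  fixes M :: "'a::real_normed_field mat"
  assumes M: "M \<in> carrier_mat n n" and ij: "i \<le> j" "j < n"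
    and super: "\<And>k. Suc k < n \<Longrightarrow> norm (M $$ (k, Suc k)) \<le> E"
    and diag: "\<And>k. k < n \<Longrightarrow> \<delta> \<le> norm (M $$ (k, k))" and "0 < \<delta>"
  shows "norm (bidiag_inverse M $$ (i, j)) \<le> E ^ (j - i) / \<delta> ^ Suc (j - i)"
proof -
  have E: "0 \<le> E" if "i < j"
    using super[of i] ij that by (meson le_less_trans norm_ge_zero order_trans Suc_leI)
  have "norm (bidiag_inverse M $$ (i, j))
      = (\<Prod>k\<in>{i..<j}. norm (M $$ (k, Suc k))) / (\<Prod>k\<in>{i..j}. norm (M $$ (k, k)))"
    using M ij by (simp add: bidiag_inverse_def norm_divide prod_norm[symmetric])
  also have "\<dots> \<le> (\<Prod>k\<in>{i..<j}. E) / (\<Prod>k\<in>{i..j}. \<delta>)"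
    using ij super diag E \<open>0 < \<delta>\<close>
    by (intro frac_le prod_mono prod_pos prod_nonneg) auto
  also have "\<dots> = E ^ (j - i) / \<delta> ^ Suc (j - i)"
    using ij by (simp add: Suc_diff_le)
  finally show ?thesis .
qed

lemma norm_bidiag_inverse_le_uniform:
  fixes M :: "'a::real_normed_field mat"
  assumes M: "M \<in> carrier_mat n n" and ij: "i < n" "j < n"
    and super: "\<And>k. Suc k < n \<Longrightarrow> norm (M $$ (k, Suc k)) \<le> E"
    and diag: "\<And>k. k < n \<Longrightarrow> \<delta> \<le> norm (M $$ (k, k))" and \<delta>: "0 < \<delta>" "\<delta> \<le> E"
  shows "norm (bidiag_inverse M $$ (i, j)) \<le> (E / \<delta>) ^ n / \<delta>"
proof (cases "i \<le> j")
  case True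
  have "norm (bidiag_inverse M $$ (i, j)) \<le> E ^ (j - i) / \<delta> ^ Suc (j - i)"
    using norm_bidiag_inverse_le[OF M True ij(2) super diag \<delta>(1)] .
  also have "\<dots> = (E / \<delta>) ^ (j - i) / \<delta>"
    by (simp add: power_divide)
  also have "\<dots> \<le> (E / \<delta>) ^ n / \<delta>"
    using \<delta> ij by (intro divide_right_mono power_increasing) auto
  finally show ?thesis .
next
  case False
  then show ?thesis using M ij \<delta> by (simp add: bidiag_inverse_def)
qed

lemma right_inverse_mat_inv:
  assumes M: "M \<in> carrier_mat n n" and B: "B \<in> carrier_mat n n" and MB: "M * B = 1\<^sub>m n"
  shows "invertible_mat M" and "mat_inv M = B"
proof -
  have BM: "B * M = 1\<^sub>m n" using mat_mult_left_right_inverse[OF M B MB] .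
  then show "invertible_mat M"
    using M B MB unfolding invertible_mat_def inverts_mat_def by auto
  have "\<exists>B'. B' \<in> carrier_mat (dim_row M) (dim_row M) \<and> inverts_mat M B' \<and> inverts_mat B' M"
    using M B MB BM unfolding inverts_mat_def by auto
  from someI_ex[OF this] have B': "mat_inv M \<in> carrier_mat n n" "mat_inv M * M = 1\<^sub>m n"
    using M unfolding mat_inv_def inverts_mat_def by auto
  have "mat_inv M = mat_inv M * (M * B)" using B' by (simp add: MB)
  also have "\<dots> = (mat_inv M * M) * B" by (rule assoc_mult_mat[symmetric, OF B'(1) M B])
  also have "\<dots> = B" using B' B by simp
  finally show "mat_inv M = B" .
qed

lemma mat_norm_le_entrywise:
  assumes B: "B \<in> carrier_mat n n" and "0 \<le> K"
    and entry: "\<And>i j. i < n \<Longrightarrow> j < n \<Longrightarrow> cmod (B $$ (i, j)) \<le> K"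
  shows "mat_norm B \<le> real n * K"
proof -
  have "(\<Sum>i<dim_row B. \<Sum>j<dim_col B. (cmod (B $$ (i, j)))\<^sup>2) = (\<Sum>i<n. \<Sum>j<n. (cmod (B $$ (i, j)))\<^sup>2)"
    using B by simp
  also have "\<dots> \<le> (\<Sum>i<n. \<Sum>j<n. K\<^sup>2)"
    by (intro sum_mono power_mono) (auto intro: entry)
  also have "\<dots> = (real n * K)\<^sup>2" by (simp add: power2_eq_square)
  finally show ?thesis
    unfolding mat_norm_def using \<open>0 \<le> K\<close> by (intro real_le_lsqrt) simp_all
qed

lemma upper_bidiagonal_imp_upper_triangular:
  "upper_bidiagonal_mat n M \<Longrightarrow> upper_triangular M"
  by (auto simp: upper_bidiagonal_mat_def upper_triangular_def)

lemma poly_prod_list_linear_eq_0_iff: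
  "poly (\<Prod>a\<leftarrow>xs. [:- a, 1:]) (x :: 'a::idom) = 0 \<longleftrightarrow> x \<in> set xs"
  by (induction xs) auto

lemma upper_triangular_diagonal_root_char_poly:
  fixes A :: "'a::idom mat"
  assumes A: "A \<in> carrier_mat n n" and "upper_triangular A" and "i < n"
  shows "poly (char_poly A) (A $$ (i, i)) = 0"
  unfolding char_poly_upper_triangular[OF assms(1,2)] poly_prod_list_linear_eq_0_iff
  using assms by (auto simp: diag_mat_def)

lemma finite_pos_lower_bound:
  fixes f :: "'a \<Rightarrow> real"
  assumes "finite A" and "\<And>x. x \<in> A \<Longrightarrow> 0 < f x"
  shows "\<exists>\<delta>>0. \<forall>x\<in>A. \<delta> \<le> f x"
proof (intro exI conjI)
  show "0 < Min (insert 1 (f ` A))" using assms by (simp add: Min_gr_iff)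
  show "\<forall>x\<in>A. Min (insert 1 (f ` A)) \<le> f x" using assms(1) by simp
qed

lemma cmod_L_diagonal_ge:
  fixes e :: complex and l a :: real
  assumes sector: "\<bar>Im e\<bar> \<le> Re e" and small: "cmod e * \<bar>l\<bar> \<le> sqrt (\<bar>l\<bar> / 2)"
  shows "\<bar>l\<bar> / 4 * cmod e \<le> cmod (e * of_real (l - a\<^sup>2) + \<i> * of_real a)"
proof -
  define z where "z = e * of_real (l - a\<^sup>2) + \<i> * of_real a"
  have Re_z: "Re z = Re e * (l - a\<^sup>2)" and Im_z: "Im z = Im e * (l - a\<^sup>2) + a"
    by (simp_all add: z_def)
  have Re_e: "cmod e / 2 \<le> Re e" and "0 \<le> Re e"
    using cmod_le[of e] sector abs_ge_zero[of "Im e"] by linarith+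
  show ?thesis
  proof (cases "\<bar>l\<bar> / 2 \<le> \<bar>l - a\<^sup>2\<bar>")
    case True
    have "\<bar>l\<bar> / 4 * cmod e = cmod e / 2 * (\<bar>l\<bar> / 2)" by simp
    also have "\<dots> \<le> Re e * \<bar>l - a\<^sup>2\<bar>"
      using Re_e \<open>0 \<le> Re e\<close> True by (intro mult_mono) auto
    also have "\<dots> = \<bar>Re z\<bar>"
      using \<open>0 \<le> Re e\<close> by (simp add: Re_z abs_mult)
    also have "\<dots> \<le> cmod z" by (rule abs_Re_le_cmod)
    finally show ?thesis by (simp add: z_def)
  next
    case False
    have "0 < l"
      using False zero_le_power2[of a] by linarith
    then have "\<bar>l\<bar> / 2 \<le> a\<^sup>2"
      using False abs_ge_self[of "l - a\<^sup>2"] by simp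
    from real_sqrt_le_mono[OF this] have a: "sqrt (\<bar>l\<bar> / 2) \<le> \<bar>a\<bar>"
      by simp
    have "\<bar>Im e * (l - a\<^sup>2)\<bar> \<le> cmod e * (\<bar>l\<bar> / 2)"
      unfolding abs_mult using abs_Im_le_cmod[of e] False by (intro mult_mono) auto
    also have "\<dots> \<le> sqrt (\<bar>l\<bar> / 2) / 2"
      using small by simp
    finally have "sqrt (\<bar>l\<bar> / 2) / 2 \<le> \<bar>Im z\<bar>"
      using Im_z a by linarith
    moreover have "\<bar>l\<bar> / 4 * cmod e \<le> sqrt (\<bar>l\<bar> / 2) / 2"
    proof -
      have "0 \<le> sqrt (\<bar>l\<bar> / 2)" and "\<bar>l\<bar> / 4 * cmod e = cmod e * \<bar>l\<bar> / 4" by simp_all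
      then show ?thesis using small by linarith
    qed
    ultimately show ?thesis
      using abs_Im_le_cmod[of z] by (simp add: z_def)
  qed
qed

lemma jordan_matrix_off_diagonal:
  assumes "i < sum_list (map fst n_as)" "j < sum_list (map fst n_as)" "j \<noteq> i"
  shows "jordan_matrix n_as $$ (i, j) \<in> (if j = Suc i then {0, 1} else {0})"
  using assms
proof (induction n_as arbitrary: i j)
  case Nil
  then show ?case by simp
next
  case (Cons p n_as)
  obtain m b where p: "p = (m, b)" by fastforce
  have entry: "jordan_matrix (p # n_as) $$ (i, j) =
      (if i < m then if j < m then jordan_block m b $$ (i, j) else 0
       else if j < m then 0 else jordan_matrix n_as $$ (i - m, j - m))"
    unfolding p jordan_matrix_Cons using Cons.prems p by (subst index_mat_four_block) auto
  show ?case
  proof (cases "i < m \<or> j < m")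
    case True
    then show ?thesis using Cons.prems entry by (auto simp: jordan_block_index)
  next
    case False
    then have "jordan_matrix n_as $$ (i - m, j - m) \<in> (if j - m = Suc (i - m) then {0, 1} else {0})"
      using Cons.prems p by (intro Cons.IH) auto
    moreover have "j - m = Suc (i - m) \<longleftrightarrow> j = Suc i"
      using False by auto
    ultimately show ?thesis using False entry by simp
  qed
qed

lemma jordan_matrix_upper_bidiagonal:
  "upper_bidiagonal_mat (sum_list (map fst n_as)) (jordan_matrix n_as)"
  unfolding upper_bidiagonal_mat_def
proof (intro conjI allI impI)
  fix i j assume "i < sum_list (map fst n_as)" "j < sum_list (map fst n_as)" "j \<noteq> i" "j \<noteq> Suc i"
  then show "jordan_matrix n_as $$ (i, j) = 0"
    using jordan_matrix_off_diagonal[of i n_as j] by simp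
qed simp

lemma jordan_matrix_superdiagonal:
  "Suc i < sum_list (map fst n_as) \<Longrightarrow> jordan_matrix n_as $$ (i, Suc i) \<in> {0, 1}"
  using jordan_matrix_off_diagonal[of i n_as "Suc i"] by simp

lemma jordan_nf_dim:
  assumes "A \<in> carrier_mat n n" and "jordan_nf A n_as"
  shows "sum_list (map fst n_as) = n"
proof -
  obtain m P Q where "{A, jordan_matrix n_as, P, Q} \<subseteq> carrier_mat m m"
    using assms(2) similar_matD unfolding jordan_nf_def by blast
  then have "dim_row A = m" and "dim_row (jordan_matrix n_as) = m" by auto
  then show ?thesis using assms(1) by auto
qed

lemma jordan_nf_diagonal_root:
  fixes A :: "'a::idom mat"
  assumes A: "A \<in> carrier_mat n n" and jnf: "jordan_nf A n_as"
    and char: "char_poly A = (\<Prod>a\<leftarrow>xs. [:- a, 1:])" and "i < n"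
  shows "jordan_matrix n_as $$ (i, i) \<in> set xs"
proof -
  have J: "upper_bidiagonal_mat n (jordan_matrix n_as)"
    using jordan_matrix_upper_bidiagonal[of n_as] jordan_nf_dim[OF A jnf] by simp
  have "char_poly A = char_poly (jordan_matrix n_as)"
    using jnf by (auto simp: jordan_nf_def intro: char_poly_similar)
  moreover have "poly (char_poly (jordan_matrix n_as)) (jordan_matrix n_as $$ (i, i)) = 0"
    using J \<open>i < n\<close> upper_bidiagonal_imp_upper_triangular[OF J]
    by (intro upper_triangular_diagonal_root_char_poly) (auto simp: upper_bidiagonal_mat_def)
  ultimately show ?thesis
    by (simp add: char flip: poly_prod_list_linear_eq_0_iff)
qed

lemma Omega_sector:
  assumes "eps \<in> Omega \<sigma> \<mu>" and "1 \<le> \<mu>"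
  shows "\<bar>Im eps\<bar> \<le> Re eps" and "\<sigma> \<le> cmod eps" and "cmod eps \<le> 2 * \<sigma>"
proof -
  have "\<bar>Im eps\<bar> \<le> \<mu> * \<bar>Im eps\<bar>"
    using \<open>1 \<le> \<mu>\<close> by (simp add: mult_le_cancel_right1)
  then show "\<bar>Im eps\<bar> \<le> Re eps"
    using assms(1) by (auto simp: Omega_def)
  show "\<sigma> \<le> cmod eps" and "cmod eps \<le> 2 * \<sigma>"
    using assms(1) by (auto simp: Omega_def)
qed

lemma L_mat_index:
  "J \<in> carrier_mat n n \<Longrightarrow> i < n \<Longrightarrow> j < n \<Longrightarrow> L_mat n J eps a $$ (i, j) =
     (if i = j then - eps * (of_real a)\<^sup>2 + \<i> * of_real a else 0) + eps * J $$ (i, j)"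
  by (simp add: L_mat_def)

lemma L_mat_upper_bidiagonal:
  assumes "upper_bidiagonal_mat n J"
  shows "upper_bidiagonal_mat n (L_mat n J eps a)"
  using assms unfolding upper_bidiagonal_mat_def by (simp add: L_mat_index) (simp add: L_mat_def)

lemma L_mat_invertible_inverse_norm_le:
  fixes J :: "complex mat" and eps :: complex and c :: real
  assumes J: "upper_bidiagonal_mat n J"
    and super: "\<And>k. Suc k < n \<Longrightarrow> cmod (J $$ (k, Suc k)) \<le> 1"
    and diag: "\<And>k. k < n \<Longrightarrow> \<exists>l. J $$ (k, k) = of_real l \<and> c \<le> \<bar>l\<bar> / 4 \<and> cmod eps * \<bar>l\<bar> \<le> sqrt (\<bar>l\<bar> / 2)"
    and c: "0 < c" "c \<le> 1" and sector: "\<bar>Im eps\<bar> \<le> Re eps" and "eps \<noteq> 0"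
  shows "invertible_mat (L_mat n J eps a)"
    and "mat_norm (mat_inv (L_mat n J eps a)) \<le> real n / (c ^ Suc n * cmod eps)"
proof -
  let ?L = "L_mat n J eps a"
  have L: "upper_bidiagonal_mat n ?L" using J by (rule L_mat_upper_bidiagonal)
  then have Lc: "?L \<in> carrier_mat n n" by (simp add: upper_bidiagonal_mat_def)
  have Jc: "J \<in> carrier_mat n n" using J by (simp add: upper_bidiagonal_mat_def)
  have L_diag: "c * cmod eps \<le> cmod (?L $$ (k, k))" if k: "k < n" for k
  proof -
    obtain l where l: "J $$ (k, k) = of_real l" "c \<le> \<bar>l\<bar> / 4" "cmod eps * \<bar>l\<bar> \<le> sqrt (\<bar>l\<bar> / 2)"
      using diag[OF k] by blast
    have "?L $$ (k, k) = eps * of_real (l - a\<^sup>2) + \<i> * of_real a"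
      using Jc k l(1) by (simp add: L_mat_index algebra_simps)
    then have "\<bar>l\<bar> / 4 * cmod eps \<le> cmod (?L $$ (k, k))"
      using cmod_L_diagonal_ge[OF sector l(3)] by simp
    then show ?thesis
      using l(2) by (meson mult_right_mono norm_ge_zero order_trans)
  qed
  have L_super: "cmod (?L $$ (k, Suc k)) \<le> cmod eps" if "Suc k < n" for k
    using super[OF that] Jc that by (simp add: L_mat_index norm_mult mult_left_le)
  have \<delta>: "0 < c * cmod eps" "c * cmod eps \<le> cmod eps"
    using c \<open>eps \<noteq> 0\<close> by (simp_all add: mult_left_le_one_le)
  have "?L * bidiag_inverse ?L = 1\<^sub>m n"
    using L L_diag \<delta>(1) by (intro bidiag_inverse_right) force+
  note inverse = right_inverse_mat_inv[OF Lc bidiag_inverse_carrier[OF Lc] this]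
  show "invertible_mat ?L" by (rule inverse(1))
  have "cmod (bidiag_inverse ?L $$ (i, j)) \<le> (cmod eps / (c * cmod eps)) ^ n / (c * cmod eps)"
    if "i < n" "j < n" for i j
    by (rule norm_bidiag_inverse_le_uniform[OF Lc that L_super L_diag \<delta>])
  then have "mat_norm (bidiag_inverse ?L) \<le> real n * ((cmod eps / (c * cmod eps)) ^ n / (c * cmod eps))"
    using c(1) \<delta>(1) by (intro mat_norm_le_entrywise bidiag_inverse_carrier[OF Lc]) simp_all
  also have "\<dots> = real n / (c ^ Suc n * cmod eps)"
    using c \<open>eps \<noteq> 0\<close> by (simp add: power_divide field_simps)
  finally show "mat_norm (mat_inv ?L) \<le> real n / (c ^ Suc n * cmod eps)"
    using inverse(2) by simp
qed

lemma jordan_L_mat_invertible_inverse_norm_le: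
  fixes A :: "complex mat" and lam :: "real list" and eps :: complex and c :: real
  assumes A: "A \<in> carrier_mat (length lam) (length lam)"
    and char: "char_poly A = (\<Prod>l\<leftarrow>lam. [:- of_real l, 1:])" and jnf: "jordan_nf A n_as"
    and c: "0 < c" "c \<le> 1" "\<forall>l\<in>set lam. c \<le> \<bar>l\<bar> / 4"
    and small: "\<forall>l\<in>set lam. cmod eps * \<bar>l\<bar> \<le> sqrt (\<bar>l\<bar> / 2)"
    and sector: "\<bar>Im eps\<bar> \<le> Re eps" and "eps \<noteq> 0"
  shows "invertible_mat (L_mat (length lam) (jordan_matrix n_as) eps a)"
    and "mat_norm (mat_inv (L_mat (length lam) (jordan_matrix n_as) eps a))
           \<le> real (length lam) / (c ^ Suc (length lam) * cmod eps)"
proof -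
  have dim: "sum_list (map fst n_as) = length lam" by (rule jordan_nf_dim[OF A jnf])
  have "char_poly A = (\<Prod>x\<leftarrow>map of_real lam. [:- x, 1:])"
    using char by (simp add: o_def)
  then have "\<exists>l. jordan_matrix n_as $$ (k, k) = of_real l \<and> c \<le> \<bar>l\<bar> / 4 \<and> cmod eps * \<bar>l\<bar> \<le> sqrt (\<bar>l\<bar> / 2)"
    if "k < length lam" for k
    using jordan_nf_diagonal_root[OF A jnf _ that] c(3) small by fastforce
  moreover have "cmod (jordan_matrix n_as $$ (k, Suc k)) \<le> 1" if "Suc k < length lam" for k
    using jordan_matrix_superdiagonal[of k n_as] that dim by auto
  ultimately show "invertible_mat (L_mat (length lam) (jordan_matrix n_as) eps a)"
    and "mat_norm (mat_inv (L_mat (length lam) (jordan_matrix n_as) eps a))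
           \<le> real (length lam) / (c ^ Suc (length lam) * cmod eps)"
    using L_mat_invertible_inverse_norm_le[OF _ _ _ c(1,2) sector \<open>eps \<noteq> 0\<close>]
      jordan_matrix_upper_bidiagonal[of n_as] dim by simp_all
qed

lemma Omega_L_mat_invertible_inverse_norm_le:
  fixes A :: "complex mat" and lam :: "real list" and c \<sigma>0 :: real
  assumes A: "A \<in> carrier_mat (length lam) (length lam)"
    and char: "char_poly A = (\<Prod>l\<leftarrow>lam. [:- of_real l, 1:])" and jnf: "jordan_nf A n_as"
    and c: "0 < c" "c \<le> 1" "\<forall>l\<in>set lam. c \<le> \<bar>l\<bar> / 4"
    and \<sigma>0: "\<forall>l\<in>set lam. 2 * \<sigma>0 * \<bar>l\<bar> \<le> sqrt (\<bar>l\<bar> / 2)"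
    and "1 \<le> \<mu>" "0 < \<sigma>" "\<sigma> \<le> \<sigma>0" "eps \<in> Omega \<sigma> \<mu>"
  shows "invertible_mat (L_mat (length lam) (jordan_matrix n_as) eps a)
    \<and> mat_norm (mat_inv (L_mat (length lam) (jordan_matrix n_as) eps a))
        \<le> (real (length lam) + 1) / c ^ Suc (length lam) / \<sigma>"
proof -
  let ?n = "length lam"
  note eps = Omega_sector[OF \<open>eps \<in> Omega \<sigma> \<mu>\<close> \<open>1 \<le> \<mu>\<close>]
  then have "eps \<noteq> 0" using \<open>0 < \<sigma>\<close> by auto
  have small: "\<forall>l\<in>set lam. cmod eps * \<bar>l\<bar> \<le> sqrt (\<bar>l\<bar> / 2)"
  proof
    fix l assume "l \<in> set lam"
    have "cmod eps * \<bar>l\<bar> \<le> 2 * \<sigma>0 * \<bar>l\<bar>"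
      using eps \<open>\<sigma> \<le> \<sigma>0\<close> by (intro mult_right_mono) auto
    then show "cmod eps * \<bar>l\<bar> \<le> sqrt (\<bar>l\<bar> / 2)"
      using \<sigma>0 \<open>l \<in> set lam\<close> by fastforce
  qed
  have "real ?n / (c ^ Suc ?n * cmod eps) \<le> real ?n / (c ^ Suc ?n * \<sigma>)"
    using c(1) \<open>0 < \<sigma>\<close> eps by (intro divide_left_mono mult_left_mono mult_pos_pos) auto
  also have "\<dots> \<le> (real ?n + 1) / c ^ Suc ?n / \<sigma>"
    using c(1) \<open>0 < \<sigma>\<close> by (simp add: field_simps)
  finally show ?thesis
    using jordan_L_mat_invertible_inverse_norm_le[OF A char jnf c small eps(1) \<open>eps \<noteq> 0\<close>, of a]
    by auto
qed

theorem proposition5p1: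
  fixes lam :: "real list"
  assumes "\<forall>l \<in> set lam. l \<noteq> 0"
  shows "\<exists>\<mu>0. \<forall>\<mu> > \<mu>0. \<exists>C > 0. \<exists>\<sigma>0 > 0. \<forall>\<sigma>. 0 < \<sigma> \<and> \<sigma> < \<sigma>0 \<longrightarrow>
          (\<forall>(A :: real mat) n_as eps. A \<in> carrier_mat (length lam) (length lam)
             \<and> char_poly (map_mat complex_of_real A) = (\<Prod>l\<leftarrow>lam. [:- complex_of_real l, 1:])
             \<and> jordan_nf (map_mat complex_of_real A) n_as
             \<and> eps \<in> Omega \<sigma> \<mu> \<longrightarrow>
               (\<forall>a :: real. invertible_mat (L_mat (length lam) (jordan_matrix n_as) eps a)
                 \<and> mat_norm (mat_inv (L_mat (length lam) (jordan_matrix n_as) eps a)) \<le> C / \<sigma>))"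
proof -
  obtain c0 where c0: "0 < c0" "\<forall>l\<in>set lam. c0 \<le> \<bar>l\<bar> / 4"
    using finite_pos_lower_bound[of "set lam" "\<lambda>l. \<bar>l\<bar> / 4"] assms by auto
  define c where "c = min 1 c0"
  have c: "0 < c" "c \<le> 1" "\<forall>l\<in>set lam. c \<le> \<bar>l\<bar> / 4"
    using c0 by (auto simp: c_def)
  obtain \<sigma>0 where "0 < \<sigma>0" and "\<forall>l\<in>set lam. \<sigma>0 \<le> sqrt (\<bar>l\<bar> / 2) / (2 * \<bar>l\<bar>)"
    using finite_pos_lower_bound[of "set lam" "\<lambda>l. sqrt (\<bar>l\<bar> / 2) / (2 * \<bar>l\<bar>)"] assms by auto
  then have \<sigma>0: "\<forall>l\<in>set lam. 2 * \<sigma>0 * \<bar>l\<bar> \<le> sqrt (\<bar>l\<bar> / 2)"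
    using assms by (auto simp: field_simps)
  define C where "C = (real (length lam) + 1) / c ^ Suc (length lam)"
  have "0 < C" using c by (simp add: C_def)
  have "invertible_mat (L_mat (length lam) (jordan_matrix n_as) eps a)
      \<and> mat_norm (mat_inv (L_mat (length lam) (jordan_matrix n_as) eps a)) \<le> C / \<sigma>"
    if "1 < \<mu>" "0 < \<sigma>" "\<sigma> < \<sigma>0" "A \<in> carrier_mat (length lam) (length lam)"
      "char_poly (map_mat complex_of_real A) = (\<Prod>l\<leftarrow>lam. [:- complex_of_real l, 1:])"
      "jordan_nf (map_mat complex_of_real A) n_as" "eps \<in> Omega \<sigma> \<mu>"
    for \<mu> \<sigma> A n_as eps a
    using Omega_L_mat_invertible_inverse_norm_le[OF _ that(5,6) c \<sigma>0 _ that(2) _ that(7)] that(1,3,4)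
    unfolding C_def by auto
  then show ?thesis
    using \<open>0 < C\<close> \<open>0 < \<sigma>0\<close> by blast
qed

end
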